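(* For a permutation $\pi$ of $[k]$ and $y\in\mathcal{Y}$ let $P_{\pi,y}=\mathrm{conv}\{\mathbbm{1}_{\pi,i}\odot y: i\in\{0,\dots,k\}\}$. Then (i) $\bigcup_{y\in\mathcal{Y},\pi}P_{\pi,y}=[-1,1]^k$; and (ii) for all $f\in\mathcal{F}_k$, all $y,y'\in\mathcal{Y}$ and all permutations $\pi$, the function $L^f(\cdot,y')$ is affine on $P_{\pi,y}$.
   Context: $[k]=\{1,\dots,k\}$, $\mathcal{Y}=\{-1,1\}^k$; $u\odot u'$ entrywise product, $\mathbbm{1}$ all-ones, $(x)_+$ entrywise positive part. $\mathbbm{1}_{\pi,i}$ is the $0/1$ indicator vector of $\{\pi_1,\dots,\pi_i\}$, with $\mathbbm{1}_{\pi,0}=0$. $\mathcal{F}_k$: set functions $f:2^{[k]}\to\mathbb{R}$ that are submodular, increasing and normalized. Lovász extension $F(x)=\max_\pi\sum_{i=1}^kx_{\pi_i}(f(\{\pi_1,..,\pi_i\})-f(\{\pi_1,..,\pi_{i-1}\}))$ for $x\in\mathbb{R}^k_+$; Lovász hinge $L^f(u,y)=F((\mathbbm{1}-u\odot y)_+)$. *)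

theory Defs
  imports "HOL-Analysis.Analysis"
begin

text \<open>Coordinates are indexed by a finite type 'n with CARD('n) = k.
  A permutation pi of [k] is a list of all indices without repetition:
  pi_i = pi ! (i-1).\<close>

definition perms :: "'n::finite list set" where
  "perms = {p. distinct p \<and> set p = UNIV}"


definition Ycube :: "(real ^ 'n::finite) set" where
  "Ycube = {y. \<forall>i. y $ i = -1 \<or> y $ i = 1}"

definition ind_prefix :: "'n::finite list \<Rightarrow> nat \<Rightarrow> real ^ 'n" where
  "ind_prefix p i = (\<chi> j. if j \<in> set (take i p) then 1 else 0)"

definition emul :: "real ^ 'n::finite \<Rightarrow> real ^ 'n \<Rightarrow> real ^ 'n" where
  "emul u v = (\<chi> j. u $ j * v $ j)"

definition pospart :: "real ^ 'n::finite \<Rightarrow> real ^ 'n" where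
  "pospart x = (\<chi> j. max 0 (x $ j))"

definition submodular :: "('n set \<Rightarrow> real) \<Rightarrow> bool" where
  "submodular f \<longleftrightarrow> (\<forall>A B. f (A \<union> B) + f (A \<inter> B) \<le> f A + f B)"

definition Fk :: "('n::finite set \<Rightarrow> real) set" where
  "Fk = {f. submodular f \<and> (\<forall>A B. A \<subseteq> B \<longrightarrow> f A \<le> f B) \<and> f {} = 0}"

definition lovasz_ext :: "('n::finite set \<Rightarrow> real) \<Rightarrow> real ^ 'n \<Rightarrow> real" where
  "lovasz_ext f x = Max ((\<lambda>p. \<Sum>i=1..CARD('n).
      x $ (p ! (i - 1)) * (f (set (take i p)) - f (set (take (i - 1) p)))) ` perms)"

definition lovasz_hinge :: "('n::finite set \<Rightarrow> real) \<Rightarrow> real ^ 'n \<Rightarrow> real ^ 'n \<Rightarrow> real" where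
  "lovasz_hinge f u y = lovasz_ext f (pospart (1 - emul u y))"

definition Ppoly :: "'n::finite list \<Rightarrow> real ^ 'n \<Rightarrow> (real ^ 'n) set" where
  "Ppoly p y = convex hull {emul (ind_prefix p i) y | i. i \<le> CARD('n)}"

end

theory Submission
  imports Defs
begin

(* Writing v = u * y (entrywise), P_{pi,y} is the image under u |-> u * y of the order simplex
   {v in [0,1]^k. v_{pi_1} >= ... >= v_{pi_k}}, the convex hull of the prefix indicators of pi.
   A point u of the cube lies in P_{pi,y} for y its sign vector and pi any ordering of |u|
   by decreasing size, which gives (i).
   For (ii), by the greedy characterisation of the Lovasz extension of a submodular function
   (the sum in its definition is largest for an ordering that sorts x decreasingly),
   F(x) is a fixed linear form in x on the set of nonnegative x sorted by a fixed permutation.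
   On P_{pi,y} the coordinates of 1 - u * y' are 1 + v_j where y_j <> y'_j and 1 - v_j
   where y_j = y'_j; they are nonnegative, and all of them are sorted decreasingly by one
   permutation: first the indices with y_j <> y'_j in the order of pi, then the others in
   the reverse order. *)

definition lovasz_sum :: "('a set \<Rightarrow> real) \<Rightarrow> ('a \<Rightarrow> real) \<Rightarrow> 'a list \<Rightarrow> real" where
  "lovasz_sum f w p = (\<Sum>i<length p. w (p!i) * (f (set (take (Suc i) p)) - f (set (take i p))))"

lemma nth_in_set_take_iff:
  assumes "distinct xs" "k < length xs"
  shows "xs ! k \<in> set (take i xs) \<longleftrightarrow> k < i"
proof
  assume "xs ! k \<in> set (take i xs)"
  then obtain l where "l < min i (length xs)" "xs ! l = xs ! k"
    by (auto simp: in_set_conv_nth)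
  with assms show "k < i" by (simp add: nth_eq_iff_index_eq)
next
  assume "k < i"
  with assms(2) show "xs ! k \<in> set (take i xs)"
    by (metis in_set_conv_nth length_take min_less_iff_conj nth_take)
qed

lemma lovasz_sum_cong:
  "(\<And>j. j \<in> set p \<Longrightarrow> w j = w' j) \<Longrightarrow> lovasz_sum f w p = lovasz_sum f w' p"
  unfolding lovasz_sum_def by (intro sum.cong) auto

lemma lovasz_sum_sum:
  "lovasz_sum f (\<lambda>j. \<Sum>m\<in>M. c m * g m j) p = (\<Sum>m\<in>M. c m * lovasz_sum f (g m) p)"
  unfolding lovasz_sum_def sum_distrib_left sum_distrib_right mult.assoc
  by (rule sum.swap)

lemma lovasz_sum_indicator_le:
  assumes "submodular f" "distinct p"
  shows "lovasz_sum f (indicator A) p \<le> f (A \<inter> set p) - f {}"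
  using assms(2)
proof (induction p rule: rev_induct)
  case Nil
  then show ?case by (simp add: lovasz_sum_def)
next
  case (snoc x p)
  then have "x \<notin> set p" "distinct p" by auto
  have snoc_eq: "lovasz_sum f (indicator A) (p @ [x])
      = lovasz_sum f (indicator A) p + indicator A x * (f (insert x (set p)) - f (set p))"
    by (simp add: lovasz_sum_def nth_append)
  show ?case
  proof (cases "x \<in> A")
    case True
    have "f (set p \<union> insert x (A \<inter> set p)) + f (set p \<inter> insert x (A \<inter> set p))
        \<le> f (set p) + f (insert x (A \<inter> set p))"
      using assms(1) unfolding submodular_def by blast
    moreover have "set p \<union> insert x (A \<inter> set p) = insert x (set p)"
      and "set p \<inter> insert x (A \<inter> set p) = A \<inter> set p"
      and "A \<inter> set (p @ [x]) = insert x (A \<inter> set p)"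
      using True \<open>x \<notin> set p\<close> by auto
    ultimately show ?thesis
      using snoc_eq snoc.IH \<open>distinct p\<close> True by simp
  next
    case False
    then show ?thesis using snoc_eq snoc.IH \<open>distinct p\<close> by simp
  qed
qed

lemma lovasz_sum_indicator_prefix:
  assumes "distinct p"
  shows "lovasz_sum f (indicator (set (take m p))) p = f (set (take m p)) - f {}"
proof -
  let ?D = "\<lambda>i. f (set (take (Suc i) p)) - f (set (take i p))"
  have "lovasz_sum f (indicator (set (take m p))) p = (\<Sum>i<length p. if i \<in> {..<m} then ?D i else 0)"
    unfolding lovasz_sum_def using assms
    by (intro sum.cong) (auto simp: indicator_def nth_in_set_take_iff)
  also have "\<dots> = (\<Sum>i<min m (length p). ?D i)"
    by (subst sum.inter_restrict[symmetric]) (simp_all add: greaterThan_Int_greaterThan min.commute)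
  also have "\<dots> = f (set (take m p)) - f {}"
    by (subst sum_lessThan_telescope) (simp add: min_def)
  finally show ?thesis .
qed

lemma sum_indicator_prefixes_nth:
  fixes d :: "nat \<Rightarrow> real"
  assumes "distinct s" "k < length s"
  shows "(\<Sum>m<length s. d m * indicator (set (take (Suc m) s)) (s ! k)) = (\<Sum>m=k..<length s. d m)"
proof -
  have "(\<Sum>m<length s. d m * indicator (set (take (Suc m) s)) (s ! k))
      = (\<Sum>m<length s. if m \<in> {k..} then d m else 0)"
    using assms by (intro sum.cong) (auto simp: nth_in_set_take_iff indicator_def)
  also have "\<dots> = (\<Sum>m=k..<length s. d m)"
    by (subst sum.inter_restrict[symmetric]) (auto intro: sum.cong)
  finally show ?thesis .
qed

(* Abel summation writes w as a combination of the indicators of the prefixes of s, with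
   nonnegative coefficients except at the full prefix; the bound of lovasz_sum_indicator_le
   is attained by s on each of them. *)
lemma lovasz_sum_le_sorted:
  assumes sub: "submodular f" and "distinct p" "distinct s" "set p = set s"
    and sorted: "sorted_wrt (\<lambda>a b. w b \<le> w a) s"
  shows "lovasz_sum f w p \<le> lovasz_sum f w s"
proof -
  define n where "n = length s"
  define a where "a k = (if k < n then w (s ! k) else 0)" for k
  define T where "T m = set (take (Suc m) s)" for m
  have layers: "w j = (\<Sum>m<n. (a m - a (Suc m)) * indicator (T m) j)" if j: "j \<in> set s" for j
  proof -
    obtain k where k: "k < n" "s ! k = j"
      using j by (auto simp: in_set_conv_nth n_def)
    have "(\<Sum>m<n. (a m - a (Suc m)) * indicator (T m) j) = (\<Sum>m=k..<n. a m - a (Suc m))"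
      unfolding T_def n_def k(2)[symmetric] using assms(3) k(1)[unfolded n_def] by (rule sum_indicator_prefixes_nth)
    also have "\<dots> = a k - a n"
      using sum_Suc_diff'[of k n "\<lambda>i. - a i"] k by simp
    finally show ?thesis
      using k by (auto simp: a_def)
  qed
  have expand: "lovasz_sum f w q = (\<Sum>m<n. (a m - a (Suc m)) * lovasz_sum f (indicator (T m)) q)"
    if "set q = set s" for q
  proof -
    have "lovasz_sum f w q = lovasz_sum f (\<lambda>j. \<Sum>m<n. (a m - a (Suc m)) * indicator (T m) j) q"
      using that layers by (intro lovasz_sum_cong) auto
    then show ?thesis
      by (simp only: lovasz_sum_sum)
  qed
  show ?thesis
    unfolding expand[OF assms(4)] expand[OF refl]
  proof (rule sum_mono)
    fix m
    assume "m \<in> {..<n}"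
    have on_s: "lovasz_sum f (indicator (T m)) s = f (T m) - f {}"
      unfolding T_def using assms(3) by (rule lovasz_sum_indicator_prefix)
    show "(a m - a (Suc m)) * lovasz_sum f (indicator (T m)) p
        \<le> (a m - a (Suc m)) * lovasz_sum f (indicator (T m)) s"
    proof (cases "Suc m < n")
      case True
      then have "0 \<le> a m - a (Suc m)"
        using sorted by (simp add: a_def sorted_wrt_iff_nth_less n_def)
      moreover have "T m \<inter> set p = T m"
        using assms(4) by (auto simp: T_def dest: in_set_takeD)
      ultimately show ?thesis
        using lovasz_sum_indicator_le[OF sub assms(2), of "T m"] on_s
        by (simp add: mult_left_mono)
    next
      case False
      with \<open>m \<in> {..<n}\<close> have "T m = set (take (length p) p)"
        using assms(4) by (simp add: T_def n_def)
      then show ?thesis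
        using lovasz_sum_indicator_prefix[OF assms(2), where m = "length p"] on_s by simp
    qed
  qed
qed

lemma finite_perms: "finite (perms :: 'n::finite list set)"
  unfolding perms_def
  by (rule finite_subset[OF _ finite_subset_distinct[of UNIV]]) auto

lemma length_perm: "p \<in> perms \<Longrightarrow> length (p :: 'n::finite list) = CARD('n)"
  unfolding perms_def by (metis (mono_tags) distinct_card mem_Collect_eq)

lemma lovasz_ext_eq_Max_lovasz_sum:
  fixes x :: "real ^ 'n::finite"
  shows "lovasz_ext f x = Max (lovasz_sum f (($) x) ` perms)"
proof -
  have "(\<Sum>i=1..CARD('n). x $ (p ! (i - 1)) * (f (set (take i p)) - f (set (take (i - 1) p))))
      = lovasz_sum f (($) x) p" if "p \<in> perms" for p
    unfolding lovasz_sum_def length_perm[OF that] by (simp add: sum.atLeast1_atMost_eq)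
  then show ?thesis
    unfolding lovasz_ext_def by (metis (no_types, lifting) image_cong)
qed

lemma lovasz_ext_eq_lovasz_sum:
  assumes "submodular f" "s \<in> perms" "sorted_wrt (\<lambda>a b. x $ b \<le> x $ a) s"
  shows "lovasz_ext f x = lovasz_sum f (($) x) s"
  unfolding lovasz_ext_eq_Max_lovasz_sum
proof (rule Max_eqI)
  show "finite (lovasz_sum f (($) x) ` perms)"
    by (simp add: finite_perms)
  show "lovasz_sum f (($) x) s \<in> lovasz_sum f (($) x) ` perms"
    using assms(2) by simp
  show "y \<le> lovasz_sum f (($) x) s" if "y \<in> lovasz_sum f (($) x) ` perms" for y
    using that assms lovasz_sum_le_sorted[of f] by (auto simp: perms_def)
qed

definition order_simplex :: "'n::finite list \<Rightarrow> (real ^ 'n) set" where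
  "order_simplex p = {v. (\<forall>j. 0 \<le> v $ j \<and> v $ j \<le> 1) \<and> sorted_wrt (\<lambda>a b. v $ b \<le> v $ a) p}"

lemma convex_order_simplex: "convex (order_simplex p)"
  unfolding convex_def order_simplex_def sorted_wrt_iff_nth_less
  by (auto intro!: add_mono mult_left_mono convex_bound_le)

lemma ind_prefix_in_order_simplex:
  assumes "distinct p"
  shows "ind_prefix p i \<in> order_simplex p"
  using assms
  by (auto simp: order_simplex_def ind_prefix_def sorted_wrt_iff_nth_less nth_in_set_take_iff)

lemma order_simplex_subset_convex_hull:
  assumes "distinct p" "set p = UNIV" "v \<in> order_simplex p"
  shows "v \<in> convex hull {ind_prefix p i | i. i \<le> length p}"
proof -
  define n where "n = length p"
  \<comment> \<open>the successive differences of 1, v(p_1), ..., v(p_n), 0 are the barycentric coordinates of v\<close>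
  define e where "e i = (if i = 0 then 1 else if i \<le> n then v $ (p ! (i - 1)) else 0)" for i
  define lam where "lam i = e i - e (Suc i)" for i
  have v01: "0 \<le> v $ j" "v $ j \<le> 1" for j
    using assms(3) by (auto simp: order_simplex_def)
  have v_mono: "v $ (p ! l) \<le> v $ (p ! k)" if "k < l" "l < n" for k l
    using assms(3) that by (auto simp: order_simplex_def sorted_wrt_iff_nth_less n_def)
  have e_mono: "e (Suc i) \<le> e i" for i
    using v01 v_mono[of "i - 1" i] by (auto simp: e_def)
  have "v = (\<Sum>i<Suc n. lam i *\<^sub>R ind_prefix p i)"
  proof (rule vec_eq_iff[THEN iffD2, rule_format])
    fix j
    have "j \<in> set p"
      using assms(2) by simp
    then obtain k where k: "k < n" "p ! k = j"
      by (auto simp: in_set_conv_nth n_def)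
    have "(\<Sum>i<Suc n. lam i *\<^sub>R ind_prefix p i) $ j
        = (\<Sum>i<Suc n. lam i * indicator (set (take i p)) (p ! k))"
      unfolding sum_component k(2)[symmetric] by (intro sum.cong) (auto simp: ind_prefix_def indicator_def)
    also have "\<dots> = (\<Sum>m<n. lam (Suc m) * indicator (set (take (Suc m) p)) (p ! k))"
      by (subst sum.lessThan_Suc_shift) simp
    also have "\<dots> = (\<Sum>m=k..<n. lam (Suc m))"
      using assms(1) k(1) unfolding n_def by (rule sum_indicator_prefixes_nth)
    also have "\<dots> = e (Suc k) - e (Suc n)"
      using sum_Suc_diff'[of k n "\<lambda>i. - e (Suc i)"] k(1) by (simp add: lam_def)
    also have "\<dots> = v $ j"
      using k by (simp add: e_def)
    finally show "v $ j = (\<Sum>i<Suc n. lam i *\<^sub>R ind_prefix p i) $ j" ..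
  qed
  also have "\<dots> \<in> convex hull {ind_prefix p i | i. i \<le> length p}"
  proof (rule convex_sum)
    show "sum lam {..<Suc n} = 1"
      using sum_lessThan_telescope'[of e "Suc n"] by (simp add: lam_def e_def)
    show "0 \<le> lam i" for i
      using e_mono[of i] by (simp add: lam_def)
    show "ind_prefix p i \<in> convex hull {ind_prefix p i | i. i \<le> length p}" if "i \<in> {..<Suc n}" for i
      using that by (intro hull_inc) (auto simp: n_def)
  qed auto
  finally show ?thesis .
qed

lemma convex_hull_ind_prefix_eq_order_simplex:
  assumes "p \<in> perms"
  shows "convex hull {ind_prefix p i | i. i \<le> CARD('n)} = order_simplex (p :: 'n::finite list)"
proof
  show "convex hull {ind_prefix p i | i. i \<le> CARD('n)} \<subseteq> order_simplex p"
    using assms by (intro hull_minimal) (auto simp: perms_def convex_order_simplex ind_prefix_in_order_simplex)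
  show "order_simplex p \<subseteq> convex hull {ind_prefix p i | i. i \<le> CARD('n)}"
    using assms order_simplex_subset_convex_hull[of p] by (auto simp: perms_def length_perm[OF assms, symmetric])
qed

lemma Ycube_mult_self:
  assumes "y \<in> Ycube"
  shows "y $ j * y $ j = 1"
proof -
  have "y $ j = -1 \<or> y $ j = 1"
    using assms by (simp add: Ycube_def)
  then show ?thesis
    by auto
qed

lemma emul_emul_Ycube: "y \<in> Ycube \<Longrightarrow> emul (emul u y) y = u"
  by (simp add: emul_def vec_eq_iff mult.assoc Ycube_mult_self)

lemma linear_emul: "linear (\<lambda>u. emul u v)"
  by (auto simp: emul_def linear_iff vec_eq_iff algebra_simps)

lemma inner_emul: "a \<bullet> emul u v = emul a v \<bullet> u"
  by (simp add: inner_vec_def emul_def algebra_simps)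

lemma Ppoly_eq:
  fixes p :: "'n::finite list"
  assumes "p \<in> perms" "y \<in> Ycube"
  shows "Ppoly p y = {u. emul u y \<in> order_simplex p}"
proof -
  have "{emul (ind_prefix p i) y | i. i \<le> CARD('n)} = (\<lambda>u. emul u y) ` {ind_prefix p i | i. i \<le> CARD('n)}"
    by auto
  then have "Ppoly p y = (\<lambda>u. emul u y) ` (convex hull {ind_prefix p i | i. i \<le> CARD('n)})"
    unfolding Ppoly_def by (simp add: convex_hull_linear_image[OF linear_emul])
  also have "\<dots> = (\<lambda>u. emul u y) ` order_simplex p"
    using assms(1) by (simp add: convex_hull_ind_prefix_eq_order_simplex)
  also have "\<dots> = {u. emul u y \<in> order_simplex p}"
  proof (intro set_eqI iffI)
    fix u
    assume "u \<in> (\<lambda>u. emul u y) ` order_simplex p"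
    then show "u \<in> {u. emul u y \<in> order_simplex p}"
      using emul_emul_Ycube[OF assms(2)] by auto
  next
    fix u
    assume "u \<in> {u. emul u y \<in> order_simplex p}"
    then have "emul (emul u y) y \<in> (\<lambda>u. emul u y) ` order_simplex p"
      by simp
    then show "u \<in> (\<lambda>u. emul u y) ` order_simplex p"
      using emul_emul_Ycube[OF assms(2)] by simp
  qed
  finally show ?thesis .
qed

lemma ex_perm_sorted_wrt:
  fixes w :: "'n::finite \<Rightarrow> 'b::linorder"
  obtains p where "p \<in> perms" "sorted_wrt (\<lambda>a b. w b \<le> w a) p"
proof -
  obtain l :: "'n list" where "distinct l" "set l = UNIV"
    using finite_distinct_list[of "UNIV :: 'n set"] by auto
  moreover have "sorted_wrt (\<lambda>a b. w b \<le> w a) (rev (sort_key w l))"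
    using sorted_sort_key[of w l] by (simp add: sorted_wrt_rev sorted_map)
  ultimately show thesis
    using that[of "rev (sort_key w l)"] by (simp add: perms_def)
qed

lemma Union_Ppoly_eq_cube:
  "(\<Union>y\<in>(Ycube :: (real ^ 'n::finite) set). \<Union>p\<in>perms. Ppoly p y) = {u. \<forall>j. -1 \<le> u $ j \<and> u $ j \<le> 1}"
proof (intro equalityI subsetI)
  fix u :: "real ^ 'n"
  assume "u \<in> (\<Union>y\<in>Ycube. \<Union>p\<in>perms. Ppoly p y)"
  then obtain y p where "y \<in> Ycube" "p \<in> perms" "emul u y \<in> order_simplex p"
    by (auto simp: Ppoly_eq)
  then have bounds: "0 \<le> u $ j * y $ j \<and> u $ j * y $ j \<le> 1 \<and> (y $ j = -1 \<or> y $ j = 1)" for j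
    by (auto simp: order_simplex_def emul_def Ycube_def)
  have "-1 \<le> u $ j \<and> u $ j \<le> 1" for j
    using bounds[of j] by (cases "y $ j = 1") auto
  then show "u \<in> {u. \<forall>j. -1 \<le> u $ j \<and> u $ j \<le> 1}"
    by simp
next
  fix u :: "real ^ 'n"
  assume u: "u \<in> {u. \<forall>j. -1 \<le> u $ j \<and> u $ j \<le> 1}"
  define y :: "real ^ 'n" where "y = (\<chi> j. if 0 \<le> u $ j then 1 else -1)"
  obtain p where p: "p \<in> perms" "sorted_wrt (\<lambda>a b. \<bar>u $ b\<bar> \<le> \<bar>u $ a\<bar>) p"
    using ex_perm_sorted_wrt .
  have "y \<in> Ycube"
    by (simp add: y_def Ycube_def)
  moreover have "emul u y = (\<chi> j. \<bar>u $ j\<bar>)"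
    by (simp add: y_def emul_def vec_eq_iff)
  then have "emul u y \<in> order_simplex p"
    using u p(2) by (simp add: order_simplex_def abs_le_iff)
  ultimately show "u \<in> (\<Union>y\<in>Ycube. \<Union>p\<in>perms. Ppoly p y)"
    using p(1) by (auto simp: Ppoly_eq)
qed

lemma lovasz_sum_linear:
  obtains a :: "real ^ 'n::finite" where "\<And>x. lovasz_sum f (($) x) s = a \<bullet> x"
proof
  fix x :: "real ^ 'n"
  let ?c = "\<lambda>i. f (set (take (Suc i) s)) - f (set (take i s))"
  show "lovasz_sum f (($) x) s = (\<Sum>i<length s. ?c i *\<^sub>R axis (s ! i) 1) \<bullet> x"
    by (simp add: lovasz_sum_def inner_sum_left inner_axis' mult.commute)
qed

lemma sorted_wrt_filter_append_rev_filter: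
  fixes v w :: "'a \<Rightarrow> real"
  assumes "sorted_wrt (\<lambda>a b. v b \<le> v a) p" "\<And>j. 0 \<le> v j"
    and "\<And>j. P j \<Longrightarrow> w j = c + v j" "\<And>j. \<not> P j \<Longrightarrow> w j = c - v j"
  shows "sorted_wrt (\<lambda>a b. w b \<le> w a) (filter P p @ rev (filter (\<lambda>j. \<not> P j) p))"
proof -
  have "sorted_wrt (\<lambda>a b. w b \<le> w a) (filter P p)"
    by (rule sorted_wrt_mono_rel[OF _ sorted_wrt_filter[OF assms(1)]]) (simp add: assms(3))
  moreover have "sorted_wrt (\<lambda>a b. w b \<le> w a) (rev (filter (\<lambda>j. \<not> P j) p))"
    unfolding sorted_wrt_rev
    by (rule sorted_wrt_mono_rel[OF _ sorted_wrt_filter[OF assms(1)]]) (simp add: assms(4))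
  moreover have "w b \<le> w a" if "P a" "\<not> P b" for a b
    using assms(2)[of a] assms(2)[of b] assms(3)[OF that(1)] assms(4)[OF that(2)] by linarith
  ultimately show ?thesis
    by (auto simp: sorted_wrt_append)
qed

lemma lovasz_hinge_eq_lovasz_sum_on_Ppoly:
  fixes p :: "'n::finite list"
  assumes sub: "submodular f" and y: "y \<in> Ycube" and y': "y' \<in> Ycube" and p: "p \<in> perms"
  obtains s where "s \<in> perms"
    "\<And>u. u \<in> Ppoly p y \<Longrightarrow> lovasz_hinge f u y' = lovasz_sum f (($) (1 - emul u y')) s"
proof
  let ?P = "\<lambda>j. y $ j \<noteq> y' $ j"
  define s where "s = filter ?P p @ rev (filter (\<lambda>j. \<not> ?P j) p)"
  show "s \<in> perms"
    using p by (auto simp: perms_def s_def)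
  fix u
  assume "u \<in> Ppoly p y"
  define v where "v = emul u y"
  define x where "x = 1 - emul u y'"
  have v: "v \<in> order_simplex p"
    using \<open>u \<in> Ppoly p y\<close> Ppoly_eq[OF p y] by (simp add: v_def)
  have x_eq: "x $ j = 1 - (y $ j * y' $ j) * v $ j" for j
  proof -
    have "x $ j = 1 - u $ j * y' $ j"
      by (simp add: x_def emul_def)
    also have "u $ j * y' $ j = (y $ j * y $ j) * (u $ j * y' $ j)"
      by (simp add: Ycube_mult_self[OF y])
    also have "\<dots> = (y $ j * y' $ j) * v $ j"
      by (simp add: v_def emul_def ac_simps)
    finally show ?thesis .
  qed
  have signs: "y $ j = -1 \<or> y $ j = 1" "y' $ j = -1 \<or> y' $ j = 1" for j
    using y y' by (auto simp: Ycube_def)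
  have x_plus: "x $ j = 1 + v $ j" if "?P j" for j
    using that x_eq[of j] signs[of j] by auto
  have x_minus: "x $ j = 1 - v $ j" if "\<not> ?P j" for j
    using that x_eq[of j] signs[of j] by auto
  have v01: "0 \<le> v $ j" "v $ j \<le> 1" for j
    using v by (auto simp: order_simplex_def)
  have "0 \<le> x $ j" for j
    using v01[of j] x_plus[of j] x_minus[of j] by (cases "?P j") auto
  then have "pospart x = x"
    by (simp add: pospart_def vec_eq_iff)
  have "sorted_wrt (\<lambda>a b. x $ b \<le> x $ a) s"
    unfolding s_def
    by (rule sorted_wrt_filter_append_rev_filter[where v = "($) v" and c = 1])
      (use v v01 x_plus x_minus in \<open>auto simp: order_simplex_def\<close>)
  with \<open>pospart x = x\<close> \<open>s \<in> perms\<close> show "lovasz_hinge f u y' = lovasz_sum f (($) (1 - emul u y')) s"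
    by (simp add: lovasz_hinge_def lovasz_ext_eq_lovasz_sum[OF sub] flip: x_def)
qed

lemma lovasz_hinge_affine_on_Ppoly:
  fixes p :: "'n::finite list"
  assumes "submodular f" "y \<in> Ycube" "y' \<in> Ycube" "p \<in> perms"
  obtains a :: "real ^ 'n" and b where "\<And>u. u \<in> Ppoly p y \<Longrightarrow> lovasz_hinge f u y' = a \<bullet> u + b"
proof -
  obtain s where hinge: "\<And>u. u \<in> Ppoly p y \<Longrightarrow> lovasz_hinge f u y' = lovasz_sum f (($) (1 - emul u y')) s"
    using lovasz_hinge_eq_lovasz_sum_on_Ppoly[OF assms] by blast
  obtain c :: "real ^ 'n" where "\<And>x. lovasz_sum f (($) x) s = c \<bullet> x"
    using lovasz_sum_linear[of f s] by blast
  then have "lovasz_hinge f u y' = (- emul c y') \<bullet> u + c \<bullet> 1" if "u \<in> Ppoly p y" for u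
    by (simp add: hinge[OF that] inner_diff_right inner_emul)
  then show thesis
    using that by blast
qed

theorem lemma3:
  shows "(\<Union>y\<in>(Ycube :: (real ^ 'n::finite) set). \<Union>p\<in>perms. Ppoly p y)
           = {u. \<forall>j. -1 \<le> u $ j \<and> u $ j \<le> 1}
       \<and> (\<forall>f\<in>(Fk :: ('n set \<Rightarrow> real) set). \<forall>y\<in>Ycube. \<forall>y'\<in>Ycube. \<forall>p\<in>perms.
           \<exists>(a :: real ^ 'n) b. \<forall>u\<in>Ppoly p y. lovasz_hinge f u y' = a \<bullet> u + b)"
proof (intro conjI ballI)
  fix f :: "'n set \<Rightarrow> real" and y y' :: "real ^ 'n" and p :: "'n list"
  assume "f \<in> Fk" "y \<in> Ycube" "y' \<in> Ycube" "p \<in> perms"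
  then obtain a :: "real ^ 'n" and b where "\<And>u. u \<in> Ppoly p y \<Longrightarrow> lovasz_hinge f u y' = a \<bullet> u + b"
    by (auto simp: Fk_def elim: lovasz_hinge_affine_on_Ppoly)
  then show "\<exists>(a :: real ^ 'n) b. \<forall>u\<in>Ppoly p y. lovasz_hinge f u y' = a \<bullet> u + b"
    by blast
qed (rule Union_Ppoly_eq_cube)

end
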